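(* Let $\mathbf L=\{L_1,\dots,L_n\}$ be a finite multiset of positive rationals, $k\in\mathbb N_{>0}$, and suppose $L_{co}\ne l^\star$. Let $\Sigma=\sum_{i\in I_{co}}L_i$, $$\underline l=\max\Bigl\{L_{co},\ \frac{\Sigma}{k+|I_{co}|}\Bigr\},\qquad \overline l=\frac{\Sigma}{k}.$$ Then $\bigl(I_{co},\ i\mapsto\lceil L_i/\overline l\rceil,\ i\mapsto\lceil L_i/\underline l\rceil\bigr)$ is an admissible restriction.
   Context: $m(l)=\sum_{i=1}^n\lfloor L_i/l\rfloor$, $c(l)=\sum_i(\lceil L_i/l\rceil-1)$; $l$ feasible iff $m(l)\ge k$; $l^\star$ is the unique optimal cut length (feasible length minimizing $c$ among feasible lengths; equals the largest feasible length). $L^{(k)}$ is the $k$-th largest element of $\mathbf L$ with multiplicity; $L_{co}=L^{(k)}$ if $k\le n$, $L_{co}=0$ if $k>n$; $I_{co}=\{i: L_i>L_{co}\}$. A triple $(I,f_l,f_u)$ with $I\subseteq[1..n]$, $f_l,f_u:I\to\mathbb N_{>0}$ is an admissible restriction if (i) for all $i\in I$, $f_l(i)=1$ or $L_i/(f_l(i)-1)$ is infeasible; (ii) for all $i\in I$, $L_i/f_u(i)$ is feasible; (iii) for all $i'\notin I$, $L_{i'}$ is feasible and $L_{i'}\ne l^\star$. *)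

theory Defs
  imports Complex_Main
begin

text \<open>Lengths are L 1, ..., L n (a multiset given by an indexed family), k pieces required.\<close>

definition num_pieces :: "(nat \<Rightarrow> rat) \<Rightarrow> nat \<Rightarrow> rat \<Rightarrow> int" where
  "num_pieces L n l = (\<Sum>i=1..n. \<lfloor>L i / l\<rfloor>)"

definition num_cuts :: "(nat \<Rightarrow> rat) \<Rightarrow> nat \<Rightarrow> rat \<Rightarrow> int" where
  "num_cuts L n l = (\<Sum>i=1..n. \<lceil>L i / l\<rceil> - 1)"

definition feasible :: "(nat \<Rightarrow> rat) \<Rightarrow> nat \<Rightarrow> nat \<Rightarrow> rat \<Rightarrow> bool" where
  "feasible L n k l \<longleftrightarrow> l > 0 \<and> num_pieces L n l \<ge> int k"

definition lstar :: "(nat \<Rightarrow> rat) \<Rightarrow> nat \<Rightarrow> nat \<Rightarrow> rat" where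
  "lstar L n k = (GREATEST l. feasible L n k l)"

definition Lco :: "(nat \<Rightarrow> rat) \<Rightarrow> nat \<Rightarrow> nat \<Rightarrow> rat" where
  "Lco L n k = (if k \<le> n then rev (sort (map L [1..<Suc n])) ! (k - 1) else 0)"

definition Ico :: "(nat \<Rightarrow> rat) \<Rightarrow> nat \<Rightarrow> nat \<Rightarrow> nat set" where
  "Ico L n k = {i \<in> {1..n}. L i > Lco L n k}"

definition admissible_restriction ::
  "(nat \<Rightarrow> rat) \<Rightarrow> nat \<Rightarrow> nat \<Rightarrow> nat set \<Rightarrow> (nat \<Rightarrow> nat) \<Rightarrow> (nat \<Rightarrow> nat) \<Rightarrow> bool" where
  "admissible_restriction L n k I fl fu \<longleftrightarrow>
     I \<subseteq> {1..n} \<and>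
     (\<forall>i\<in>I. fl i > 0 \<and> fu i > 0) \<and>
     (\<forall>i\<in>I. fl i = 1 \<or> \<not> feasible L n k (L i / of_nat (fl i - 1))) \<and>
     (\<forall>i\<in>I. feasible L n k (L i / of_nat (fu i))) \<and>
     (\<forall>i'\<in>{1..n} - I. feasible L n k (L i') \<and> L i' \<noteq> lstar L n k)"

end

theory Submission
  imports Defs
begin

text \<open>Every length in \<open>(0, L\<^sub>c\<^sub>o]\<close> is feasible, because at least \<open>k\<close> rods are at least
  \<open>L\<^sub>c\<^sub>o\<close> long; hence \<open>L\<^sub>c\<^sub>o < l\<^sup>\<star>\<close>, and every piece of length \<open>l > L\<^sub>c\<^sub>o\<close> is cut from a rod
  in \<open>I\<^sub>c\<^sub>o\<close>, which gives \<open>k l\<^sup>\<star> \<le> \<Sigma>\<close>, i.e. \<open>l\<^sup>\<star> \<le> \<Sigma>/k\<close>. Conversely \<open>\<lfloor>x\<rfloor> > x - 1\<close> shows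
  that \<open>\<Sigma>/(k + |I\<^sub>c\<^sub>o|)\<close> is feasible, so the lower bound is feasible. Admissibility then
  only uses \<open>L\<^sub>i/\<lceil>L\<^sub>i/l\<rceil> \<le> l\<close> together with feasibility being downward closed, and
  \<open>L\<^sub>i/(\<lceil>L\<^sub>i/l\<rceil> - 1) > l\<close> together with maximality of \<open>l\<^sup>\<star>\<close>.\<close>

lemma num_pieces_antimono:
  fixes L :: "nat \<Rightarrow> rat"
  assumes L_pos: "\<forall>i\<in>{1..n}. L i > 0" and "0 < l" "l \<le> l'"
  shows "num_pieces L n l' \<le> num_pieces L n l"
  unfolding num_pieces_def
proof (rule sum_mono)
  fix i assume "i \<in> {1..n}"
  then have "L i / l' \<le> L i / l"
    using assms by (intro divide_left_mono) (auto intro: less_imp_le)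
  then show "\<lfloor>L i / l'\<rfloor> \<le> \<lfloor>L i / l\<rfloor>" by (rule floor_mono)
qed

lemma feasible_antimono:
  fixes L :: "nat \<Rightarrow> rat"
  assumes "\<forall>i\<in>{1..n}. L i > 0" "feasible L n k l" "0 < l'" "l' \<le> l"
  shows "feasible L n k l'"
  using assms num_pieces_antimono[of n L l' l] unfolding feasible_def by auto

lemma card_ge_le_num_pieces:
  fixes L :: "nat \<Rightarrow> rat"
  assumes L_pos: "\<forall>i\<in>{1..n}. L i > 0" and l_pos: "0 < l"
  shows "int (card {j\<in>{1..n}. l \<le> L j}) \<le> num_pieces L n l"
proof -
  have "int (card {j\<in>{1..n}. l \<le> L j}) = (\<Sum>j=1..n. if l \<le> L j then 1 else 0)"
    by (simp add: sum.If_cases Int_def)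
  also have "\<dots> \<le> num_pieces L n l"
    unfolding num_pieces_def
  proof (rule sum_mono)
    fix j assume "j \<in> {1..n}"
    then have "0 < L j" using L_pos by auto
    then show "(if l \<le> L j then 1 else 0) \<le> \<lfloor>L j / l\<rfloor>"
      using l_pos by simp
  qed
  finally show ?thesis .
qed

lemma sum_ratio_minus_one_le_num_pieces:
  fixes L :: "nat \<Rightarrow> rat"
  assumes "\<forall>i\<in>{1..n}. L i > 0" "0 < l" "I \<subseteq> {1..n}"
  shows "(\<Sum>j\<in>I. L j / l - 1) \<le> of_int (num_pieces L n l)"
proof -
  have "(\<Sum>j\<in>I. L j / l - 1) \<le> (\<Sum>j\<in>I. of_int \<lfloor>L j / l\<rfloor>)"
    by (rule sum_mono) linarith
  also have "\<dots> \<le> (\<Sum>j\<in>{1..n}. of_int \<lfloor>L j / l\<rfloor>)"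
    using assms by (intro sum_mono2) (auto intro!: divide_nonneg_pos less_imp_le)
  finally show ?thesis by (simp add: num_pieces_def)
qed

lemma feasible_sum_div_card:
  fixes L :: "nat \<Rightarrow> rat"
  assumes L_pos: "\<forall>i\<in>{1..n}. L i > 0" and I: "I \<subseteq> {1..n}"
    and S_pos: "0 < (\<Sum>j\<in>I. L j)"
  shows "feasible L n k ((\<Sum>j\<in>I. L j) / of_nat (k + card I))"
proof -
  define S where "S = (\<Sum>j\<in>I. L j)"
  define l where "l = S / of_nat (k + card I)"
  have "I \<noteq> {}" using S_pos by auto
  moreover have "finite I" using I finite_subset by blast
  ultimately have "card I > 0" by (simp add: card_gt_0_iff)
  then have l_pos: "0 < l" using S_pos by (simp add: l_def S_def)
  have "(\<Sum>j\<in>I. L j / l - 1) = S / l - of_nat (card I)"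
    by (simp add: sum_subtractf S_def sum_divide_distrib)
  also have "\<dots> = of_nat k"
    using S_pos \<open>card I > 0\<close> by (simp add: l_def S_def)
  finally show ?thesis
    using sum_ratio_minus_one_le_num_pieces[OF L_pos l_pos I] l_pos
    by (simp add: feasible_def l_def S_def)
qed

lemma k_le_card_ge_Lco:
  fixes L :: "nat \<Rightarrow> rat"
  assumes "k \<le> n" "0 < k"
  shows "k \<le> card {j\<in>{1..n}. Lco L n k \<le> L j}"
proof -
  define xs where "xs = map L [1..<Suc n]"
  define ys where "ys = rev (sort xs)"
  let ?P = "\<lambda>x. Lco L n k \<le> x"
  have co: "Lco L n k = ys ! (k - 1)" using assms by (simp add: Lco_def ys_def xs_def)
  have len: "length ys = n" by (simp add: ys_def xs_def)
  have "ys ! (k - 1) \<le> ys ! t" if "t < k" for t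
  proof -
    have "ys ! t = sort xs ! (n - Suc t)" "ys ! (k - 1) = sort xs ! (n - k)"
      using len assms that by (auto simp: ys_def rev_nth xs_def)
    then show ?thesis
      using sorted_nth_mono[OF sorted_sort, of "n - k" "n - Suc t" xs] that assms
      by (simp add: xs_def)
  qed
  then have "filter ?P (take k ys) = take k ys"
    using co len by (auto simp: filter_id_conv in_set_conv_nth)
  then have "k \<le> length (filter ?P (take k ys))" using len assms by simp
  also have "\<dots> \<le> length (filter ?P ys)"
    by (metis append_take_drop_id filter_append le_add1 length_append)
  also have "\<dots> = length (filter (\<lambda>j. ?P (L j)) [1..<Suc n])"
    by (simp add: ys_def rev_filter[symmetric] filter_sort xs_def filter_map comp_def)
  also have "\<dots> = card {j\<in>{1..n}. ?P (L j)}"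
    by (subst distinct_card[symmetric]) (auto intro: arg_cong[where f = card])
  finally show ?thesis .
qed

lemma Lco_nonneg:
  fixes L :: "nat \<Rightarrow> rat"
  assumes "\<forall>i\<in>{1..n}. L i > 0" "0 < k"
  shows "0 \<le> Lco L n k"
proof (cases "k \<le> n")
  case True
  then have "Lco L n k \<in> set (rev (sort (map L [1..<Suc n])))"
    unfolding Lco_def using assms by (simp del: set_rev set_sort add: nth_mem)
  then show ?thesis using assms by (auto intro: less_imp_le)
qed (simp add: Lco_def)

lemma feasible_if_le_Lco:
  fixes L :: "nat \<Rightarrow> rat"
  assumes L_pos: "\<forall>i\<in>{1..n}. L i > 0" and "0 < k" "0 < l" "l \<le> Lco L n k"
  shows "feasible L n k l"
proof -
  have "k \<le> n" using assms by (auto simp: Lco_def split: if_splits)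
  then have "k \<le> card {j\<in>{1..n}. Lco L n k \<le> L j}"
    using k_le_card_ge_Lco \<open>0 < k\<close> by blast
  also have "\<dots> \<le> card {j\<in>{1..n}. l \<le> L j}"
    using \<open>l \<le> Lco L n k\<close> by (intro card_mono) auto
  finally show ?thesis
    using card_ge_le_num_pieces[OF L_pos \<open>0 < l\<close>] \<open>0 < l\<close> by (simp add: feasible_def)
qed

lemma num_pieces_above_Lco:
  fixes L :: "nat \<Rightarrow> rat"
  assumes L_pos: "\<forall>i\<in>{1..n}. L i > 0" and "Lco L n k < l"
  shows "num_pieces L n l = (\<Sum>j\<in>Ico L n k. \<lfloor>L j / l\<rfloor>)"
  unfolding num_pieces_def
proof (rule sum.mono_neutral_right)
  show "\<forall>j\<in>{1..n} - Ico L n k. \<lfloor>L j / l\<rfloor> = 0"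
  proof
    fix j assume j: "j \<in> {1..n} - Ico L n k"
    then have "0 < L j" "L j < l" using assms by (auto simp: Ico_def)
    then show "\<lfloor>L j / l\<rfloor> = 0" by (simp add: floor_eq_iff)
  qed
qed (auto simp: Ico_def)

lemma feasible_above_Lco_le_sum:
  fixes L :: "nat \<Rightarrow> rat"
  assumes L_pos: "\<forall>i\<in>{1..n}. L i > 0" and "feasible L n k l" "Lco L n k < l"
  shows "of_nat k * l \<le> (\<Sum>j\<in>Ico L n k. L j)"
proof -
  have l_pos: "0 < l" using assms by (simp add: feasible_def)
  have "of_nat k \<le> (of_int (num_pieces L n l) :: rat)"
    using assms by (simp add: feasible_def)
  also have "\<dots> \<le> (\<Sum>j\<in>Ico L n k. L j / l)"
    unfolding num_pieces_above_Lco[OF assms(1,3)] by (simp add: sum_mono)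
  also have "\<dots> = (\<Sum>j\<in>Ico L n k. L j) / l" by (simp add: sum_divide_distrib)
  finally show ?thesis using l_pos by (simp add: pos_le_divide_eq)
qed

text \<open>The witness is the smallest ratio \<open>L\<^sub>i/\<lfloor>L\<^sub>i/l\<rfloor>\<close> over the rods that yield a piece.\<close>

lemma feasible_imp_feasible_ratio:
  fixes L :: "nat \<Rightarrow> rat"
  assumes L_pos: "\<forall>i\<in>{1..n}. L i > 0" and "0 < k" and feas: "feasible L n k l"
  shows "\<exists>i\<in>{1..n}. \<exists>m::nat. 1 \<le> m \<and> of_nat m \<le> L i / l \<and> l \<le> L i / of_nat m \<and>
           feasible L n k (L i / of_nat m)"
proof -
  have l_pos: "0 < l" using feas by (simp add: feasible_def)
  define f where "f j = \<lfloor>L j / l\<rfloor>" for j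
  define P where "P = {j\<in>{1..n}. 1 \<le> f j}"
  have "P \<noteq> {}"
  proof
    assume "P = {}"
    then have "num_pieces L n l \<le> 0"
      unfolding num_pieces_def f_def[symmetric] P_def by (intro sum_nonpos) auto
    then show False using feas \<open>0 < k\<close> by (simp add: feasible_def)
  qed
  moreover have "finite P" by (simp add: P_def)
  ultimately obtain i where iP: "i \<in> P" and i_min: "\<And>j. j \<in> P \<Longrightarrow> L i / of_int (f i) \<le> L j / of_int (f j)"
    using Min_in[of "(\<lambda>j. L j / of_int (f j)) ` P"] Min_le[of "(\<lambda>j. L j / of_int (f j)) ` P"]
    by fastforce
  define c where "c = L i / of_int (f i)"
  have fi: "1 \<le> f i" "of_int (f i) \<le> L i / l" using iP by (auto simp: P_def f_def)
  then have lc: "l \<le> c" using l_pos by (simp add: c_def pos_le_divide_eq mult.commute)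
  have "num_pieces L n l \<le> num_pieces L n c"
    unfolding num_pieces_def f_def[symmetric]
  proof (rule sum_mono)
    fix j assume j: "j \<in> {1..n}"
    show "f j \<le> \<lfloor>L j / c\<rfloor>"
    proof (cases "j \<in> P")
      case True
      then have "c * of_int (f j) \<le> L j"
        using i_min[OF True] by (simp add: c_def P_def pos_le_divide_eq)
      then show ?thesis using lc l_pos by (simp add: le_floor_iff pos_le_divide_eq mult.commute)
    next
      case False
      then have "f j \<le> 0" using j by (simp add: P_def)
      moreover have "0 < L j" "0 < c" using j L_pos lc l_pos by auto
      then have "0 \<le> \<lfloor>L j / c\<rfloor>" by simp
      ultimately show ?thesis by linarith
    qed
  qed
  then have "feasible L n k c" using feas lc l_pos by (simp add: feasible_def)
  then show ?thesis
    using iP fi lc by (intro bexI[of _ i] exI[of _ "nat (f i)"]) (auto simp: P_def c_def)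
qed

lemma ex_greatest_feasible:
  fixes L :: "nat \<Rightarrow> rat"
  assumes L_pos: "\<forall>i\<in>{1..n}. L i > 0" and "0 < k" "1 \<le> n"
  shows "\<exists>g. feasible L n k g \<and> (\<forall>l. feasible L n k l \<longrightarrow> l \<le> g)"
proof -
  define l0 where "l0 = L 1 / of_nat k"
  have L1: "0 < L 1" using assms by auto
  then have l0_pos: "0 < l0" using \<open>0 < k\<close> by (simp add: l0_def)
  have "int k = \<lfloor>L 1 / l0\<rfloor>" using L1 \<open>0 < k\<close> by (simp add: l0_def)
  also have "\<dots> \<le> num_pieces L n l0"
    unfolding num_pieces_def using assms l0_pos
    by (intro member_le_sum) (auto intro!: divide_nonneg_pos less_imp_le)
  finally have feas0: "feasible L n k l0" using l0_pos by (simp add: feasible_def)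
  define C where "C = (\<lambda>(i, m). L i / of_nat m) ` (SIGMA i:{1..n}. {1..nat \<lceil>L i / l0\<rceil>})"
  define S where "S = {c\<in>C. feasible L n k c}"
  have "finite S" by (simp add: S_def C_def)
  have "L 1 / l0 = of_nat k" using L1 by (simp add: l0_def)
  then have "(1, k) \<in> (SIGMA i:{1..n}. {1..nat \<lceil>L i / l0\<rceil>})"
    using assms by simp
  then have "l0 \<in> C" unfolding C_def by (rule rev_image_eqI) (simp add: l0_def)
  then have "l0 \<in> S" using feas0 by (simp add: S_def)
  have "l \<le> Max S" if feas: "feasible L n k l" for l
  proof (cases "l \<le> l0")
    case True then show ?thesis using Max_ge[OF \<open>finite S\<close> \<open>l0 \<in> S\<close>] by simp
  next
    case False
    obtain i m where i: "i \<in> {1..n}" and m: "1 \<le> m" "of_nat m \<le> L i / l" "l \<le> L i / of_nat m"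
      and feas_m: "feasible L n k (L i / of_nat m)"
      using feasible_imp_feasible_ratio[OF L_pos \<open>0 < k\<close> feas] by blast
    have "L i / l \<le> L i / l0"
      using False i L_pos l0_pos by (intro divide_left_mono) (auto intro: less_imp_le)
    then have "m \<le> nat \<lceil>L i / l0\<rceil>" using m(2) by linarith
    then have "L i / of_nat m \<in> S"
      unfolding S_def C_def using i m feas_m by (auto intro!: image_eqI[where x = "(i, m)"])
    then show ?thesis using m(3) Max_ge[OF \<open>finite S\<close>] by fastforce
  qed
  moreover have "Max S \<in> S" using \<open>finite S\<close> \<open>l0 \<in> S\<close> by (intro Max_in) auto
  ultimately show ?thesis by (auto simp: S_def)
qed

lemma
  fixes L :: "nat \<Rightarrow> rat"
  assumes "\<forall>i\<in>{1..n}. L i > 0" "0 < k" "1 \<le> n"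
  shows lstar_feasible: "feasible L n k (lstar L n k)"
    and feasible_le_lstar: "feasible L n k l \<Longrightarrow> l \<le> lstar L n k"
proof -
  obtain g where g: "feasible L n k g" "\<forall>l. feasible L n k l \<longrightarrow> l \<le> g"
    using ex_greatest_feasible[OF assms] by blast
  then have "lstar L n k = g" unfolding lstar_def by (intro Greatest_equality) auto
  then show "feasible L n k (lstar L n k)" "feasible L n k l \<Longrightarrow> l \<le> lstar L n k"
    using g by auto
qed

lemma Lco_less_lstar:
  fixes L :: "nat \<Rightarrow> rat"
  assumes L_pos: "\<forall>i\<in>{1..n}. L i > 0" and "0 < k" "1 \<le> n"
    and "Lco L n k \<noteq> lstar L n k"
  shows "Lco L n k < lstar L n k"
proof (cases "0 < Lco L n k")
  case True
  then have "Lco L n k \<le> lstar L n k"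
    using feasible_le_lstar[OF assms(1-3)] feasible_if_le_Lco[OF L_pos \<open>0 < k\<close>] by blast
  then show ?thesis using assms(4) by simp
next
  case False
  then show ?thesis
    using Lco_nonneg[OF L_pos \<open>0 < k\<close>] lstar_feasible[OF assms(1-3)]
    by (simp add: feasible_def)
qed

lemma divide_ceiling_divide_le:
  fixes x u :: "'a::floor_ceiling"
  assumes "0 < x" "0 < u"
  shows "x / of_int \<lceil>x / u\<rceil> \<le> u"
proof -
  have "x \<le> of_int \<lceil>x / u\<rceil> * u" using assms by (simp add: pos_divide_le_eq[symmetric])
  moreover have "0 < \<lceil>x / u\<rceil>" using assms by simp
  ultimately show ?thesis by (simp add: pos_divide_le_eq mult.commute)
qed

lemma less_divide_ceiling_divide_minus_one:
  fixes x u :: "'a::floor_ceiling"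
  assumes "0 < u" "2 \<le> \<lceil>x / u\<rceil>"
  shows "u < x / (of_int \<lceil>x / u\<rceil> - 1)"
proof -
  have "of_int \<lceil>x / u\<rceil> - 1 < x / u" by linarith
  then have "(of_int \<lceil>x / u\<rceil> - 1) * u < x" using assms(1) by (simp add: pos_less_divide_eq)
  moreover have "1 < \<lceil>x / u\<rceil>" using assms(2) by simp
  then have "(1 :: 'a) < of_int \<lceil>x / u\<rceil>" by (metis of_int_1 of_int_less_iff)
  ultimately show ?thesis by (simp add: pos_less_divide_eq mult.commute)
qed

lemma admissible_restriction_Ico:
  fixes L :: "nat \<Rightarrow> rat"
  assumes L_pos: "\<forall>i\<in>{1..n}. L i > 0" and k: "0 < k" and n: "1 \<le> n"
    and co_ls: "Lco L n k < lstar L n k"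
    and lo: "feasible L n k lo" and up: "lstar L n k \<le> up"
  shows "admissible_restriction L n k (Ico L n k) (\<lambda>i. nat \<lceil>L i / up\<rceil>) (\<lambda>i. nat \<lceil>L i / lo\<rceil>)"
proof -
  have lo_pos: "0 < lo" using lo by (simp add: feasible_def)
  have up_pos: "0 < up" using up lstar_feasible[OF L_pos k n] by (simp add: feasible_def)
  have L_pos_Ico: "0 < L i" if "i \<in> Ico L n k" for i using that L_pos by (auto simp: Ico_def)
  have lower: "nat \<lceil>L i / up\<rceil> = 1 \<or> \<not> feasible L n k (L i / of_nat (nat \<lceil>L i / up\<rceil> - 1))"
    if "i \<in> Ico L n k" for i
  proof (cases "2 \<le> \<lceil>L i / up\<rceil>")
    case True
    define q where "q = \<lceil>L i / up\<rceil>"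
    have "2 \<le> q" using True by (simp add: q_def)
    then have "of_nat (nat q - 1) = (of_int q - 1 :: rat)" by (simp add: of_nat_diff)
    then have "of_nat (nat \<lceil>L i / up\<rceil> - 1) = (of_int \<lceil>L i / up\<rceil> - 1 :: rat)"
      by (simp add: q_def)
    then have "up < L i / of_nat (nat \<lceil>L i / up\<rceil> - 1)"
      using less_divide_ceiling_divide_minus_one[OF up_pos True] by simp
    then show ?thesis using up feasible_le_lstar[OF L_pos k n] by fastforce
  next
    case False
    moreover have "0 < \<lceil>L i / up\<rceil>" using L_pos_Ico[OF that] up_pos by simp
    ultimately have "\<lceil>L i / up\<rceil> = 1" by linarith
    then show ?thesis by simp
  qed
  have upper: "feasible L n k (L i / of_nat (nat \<lceil>L i / lo\<rceil>))" if "i \<in> Ico L n k" for i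
    using feasible_antimono[OF L_pos lo] divide_ceiling_divide_le[OF L_pos_Ico[OF that] lo_pos]
      L_pos_Ico[OF that] lo_pos by simp
  have outside: "feasible L n k (L j) \<and> L j \<noteq> lstar L n k" if "j \<in> {1..n} - Ico L n k" for j
    using that L_pos feasible_if_le_Lco[OF L_pos k] co_ls by (auto simp: Ico_def)
  show ?thesis
    unfolding admissible_restriction_def
    using L_pos_Ico lo_pos up_pos lower upper outside by (auto simp: Ico_def)
qed

theorem mainTheorem12:
  fixes L :: "nat \<Rightarrow> rat" and n k :: nat
  assumes n_pos: "n \<ge> 1"
    and L_pos: "\<forall>i\<in>{1..n}. L i > 0"
    and k_pos: "k > 0"
    and co_ne: "Lco L n k \<noteq> lstar L n k"
  shows "let \<Sigma> = (\<Sum>i\<in>Ico L n k. L i);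
             lo = max (Lco L n k) (\<Sigma> / of_nat (k + card (Ico L n k)));
             up = \<Sigma> / of_nat k
         in admissible_restriction L n k (Ico L n k)
              (\<lambda>i. nat \<lceil>L i / up\<rceil>) (\<lambda>i. nat \<lceil>L i / lo\<rceil>)"
proof -
  define \<Sigma> where "\<Sigma> = (\<Sum>i\<in>Ico L n k. L i)"
  define lo where "lo = max (Lco L n k) (\<Sigma> / of_nat (k + card (Ico L n k)))"
  have ls: "feasible L n k (lstar L n k)" using lstar_feasible[OF L_pos k_pos n_pos] .
  have co_ls: "Lco L n k < lstar L n k" using Lco_less_lstar[OF L_pos k_pos n_pos co_ne] .
  have k_ls: "of_nat k * lstar L n k \<le> \<Sigma>"
    unfolding \<Sigma>_def using feasible_above_Lco_le_sum[OF L_pos ls co_ls] .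
  then have up: "lstar L n k \<le> \<Sigma> / of_nat k"
    using k_pos by (simp add: pos_le_divide_eq mult.commute)
  have "0 < of_nat k * lstar L n k" using k_pos ls by (simp add: feasible_def)
  then have "0 < \<Sigma>" using k_ls by linarith
  then have "feasible L n k (\<Sigma> / of_nat (k + card (Ico L n k)))"
    unfolding \<Sigma>_def by (intro feasible_sum_div_card[OF L_pos]) (auto simp: Ico_def)
  then have "feasible L n k lo"
    using feasible_if_le_Lco[OF L_pos k_pos] by (auto simp: lo_def max_def feasible_def)
  then show ?thesis
    using admissible_restriction_Ico[OF L_pos k_pos n_pos co_ls _ up] by (simp add: lo_def \<Sigma>_def)
qed

end
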